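(* Under the MS-LS model described in the context, assume additionally that $\alpha_i+\alpha_j=\alpha$ for all $i\neq j$. Then for any node $i$ and state $k$, the second factorial moment of the strength given $s_t=k$ is \[ \left.\widetilde G_k''(x)\right|_{x=1}=e^{2\alpha}(N-1)\big(8\sigma_k^2\beta+1\big)^{-d/2}+(N-1)(N-2)e^{2\alpha}\big(2\sigma_k^2\beta+1\big)^{-d/2}\big(6\sigma_k^2\beta+1\big)^{-d/2}. \]
   Context: MS-LS model. Let $N\ge 2$ nodes $V=\{1,\dots,N\}$, a latent dimension $d\ge1$, a constant $\beta>0$, real constants $\alpha_1,\dots,\alpha_N$ (individual effects) and variances $\sigma_1^2,\dots,\sigma_K^2>0$. Let $(s_t)_{t\ge1}$ be a Markov chain on $\{1,\dots,K\}$, $K<\infty$, with transition probabilities $q_{lk}=\mathbb P(s_t=k\mid s_{t-1}=l)$. Independently of the chain, let $Z_{ik}$, $i=1,\dots,N$, $k=1,\dots,K$, be independent random vectors with $Z_{ik}\sim\mathcal N(\mathbf 0,\sigma_k^2 I_d)$ in $\mathbb R^d$. The latent position of node $i$ at time $t$ is $X_{it}=\sum_{k=1}^K\mathbb I(s_t=k)Z_{ik}$. Conditionally on the chain and on all $Z_{ik}$, the edge weights $Y_{ijt}=Y_{jit}$ ($i\ne j$) are independent across unordered pairs, each depending on the chain only through $s_t$, with $Y_{ijt}\sim\mathrm{Poisson}(\lambda_{ijt})$ and $\lambda_{ijt}=\exp\{\alpha_i+\alpha_j-\sum_{k=1}^K\mathbb I(s_t=k)\beta\|Z_{ik}-Z_{jk}\|^2\}$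 (squared Euclidean norm). The nodal strength of node $i$ is $Y_{it}=\sum_{j\neq i}Y_{ijt}$. Its conditional probability generating functions are $G_l(x)=\mathbb E(x^{Y_{it}}\mid s_{t-1}=l)$ and $\widetilde G_k(x)=\mathbb E(x^{Y_{it}}\mid s_t=k)$, where expectations integrate over both the Poisson weights and the latent vectors $Z$. *)

theory Defs
  imports "HOL-Probability.Probability"
begin

text \<open>Nodes are 1..N, states 1..K, latent coordinates 1..d.
  A latent configuration z maps (i,k,c) to the c-th coordinate of Z_ik.
  sigma k is the standard deviation (so sigma k ^ 2 is the variance sigma_k^2).\<close>

definition latent_measure ::
  "nat \<Rightarrow> nat \<Rightarrow> nat \<Rightarrow> (nat \<Rightarrow> real) \<Rightarrow> (nat \<times> nat \<times> nat \<Rightarrow> real) measure" where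
  "latent_measure N K d \<sigma> =
     PiM ({1..N} \<times> {1..K} \<times> {1..d}) (\<lambda>(i, k, c). density lborel (normal_density 0 (\<sigma> k)))"

definition latent_sqdist :: "nat \<Rightarrow> (nat \<times> nat \<times> nat \<Rightarrow> real) \<Rightarrow> nat \<Rightarrow> nat \<Rightarrow> nat \<Rightarrow> real" where
  "latent_sqdist d z k i j = (\<Sum>c\<in>{1..d}. (z (i, k, c) - z (j, k, c))\<^sup>2)"

definition edge_rate ::
  "nat \<Rightarrow> nat \<Rightarrow> (nat \<Rightarrow> real) \<Rightarrow> real \<Rightarrow> (nat \<times> nat \<times> nat \<Rightarrow> real) \<Rightarrow> nat \<Rightarrow> nat \<Rightarrow> nat \<Rightarrow> real" where
  "edge_rate K d \<alpha> \<beta> z s i j =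
     exp (\<alpha> i + \<alpha> j - (\<Sum>k\<in>{1..K}. of_bool (s = k) * \<beta> * latent_sqdist d z k i j))"

text \<open>Unordered pairs {i,j}, i ~= j, represented as (min, max).\<close>
definition node_pairs :: "nat \<Rightarrow> (nat \<times> nat) set" where
  "node_pairs N = {(i, j). i \<in> {1..N} \<and> j \<in> {1..N} \<and> i < j}"

definition weights_measure ::
  "nat \<Rightarrow> nat \<Rightarrow> nat \<Rightarrow> (nat \<Rightarrow> real) \<Rightarrow> real \<Rightarrow> (nat \<times> nat \<times> nat \<Rightarrow> real) \<Rightarrow> nat
     \<Rightarrow> (nat \<times> nat \<Rightarrow> nat) measure" where
  "weights_measure N K d \<alpha> \<beta> z s =
     PiM (node_pairs N) (\<lambda>(i, j). measure_pmf (poisson_pmf (edge_rate K d \<alpha> \<beta> z s i j)))"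

definition strength :: "nat \<Rightarrow> nat \<Rightarrow> (nat \<times> nat \<Rightarrow> nat) \<Rightarrow> nat" where
  "strength N i y = (\<Sum>j\<in>{1..N} - {i}. y (min i j, max i j))"

definition cond_pgf ::
  "nat \<Rightarrow> nat \<Rightarrow> nat \<Rightarrow> (nat \<Rightarrow> real) \<Rightarrow> (nat \<Rightarrow> real) \<Rightarrow> real \<Rightarrow> nat \<Rightarrow> nat \<Rightarrow> real \<Rightarrow> real" where
  "cond_pgf N K d \<sigma> \<alpha> \<beta> k i x =
     (\<integral>z. (\<integral>y. x ^ strength N i y \<partial>weights_measure N K d \<alpha> \<beta> z k) \<partial>latent_measure N K d \<sigma>)"

end

theory Submission
  imports Defs
begin

text \<open>Given the latent positions \<open>Z\<close>, the strength of node \<open>i\<close> is a sum of independent Poisson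
  variables, so its conditional pgf is \<open>exp ((x - 1) * L Z)\<close>, where \<open>L Z\<close> is the sum of the rates
  \<open>\<lambda>\<^sub>i\<^sub>j\<close> over \<open>j \<noteq> i\<close>. Since \<open>L\<close> is bounded, the mixture over \<open>Z\<close> can be differentiated
  under the integral sign, and \<open>G''(1) = E (L Z)\<^sup>2 = \<Sum>\<^sub>j \<Sum>\<^sub>l E (\<lambda>\<^sub>i\<^sub>j \<lambda>\<^sub>i\<^sub>l)\<close>.
  Each summand is a Gaussian integral: given \<open>Z\<^sub>i\<close>, the neighbours are independent, and
  integrating out a neighbour coordinate \<open>v\<close> turns \<open>exp (- g (u - v)\<^sup>2)\<close> into a Gaussian smoothing
  of \<open>exp (- g u\<^sup>2)\<close>, where \<open>u\<close> is the matching coordinate of \<open>Z\<^sub>i\<close>; integrating the \<open>n\<close>-th power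
  of this smoothing over \<open>u\<close> gives
  \<open>(1 + 2g\<sigma>\<^sup>2)\<^bsup>-(n-1)/2\<^esup> (1 + 2(n+1)g\<sigma>\<^sup>2)\<^bsup>-1/2\<^esup>\<close>. The diagonal terms (\<open>n = 1\<close>, \<open>g = 2\<beta>\<close>)
  and the off-diagonal ones (\<open>n = 2\<close>, \<open>g = \<beta>\<close>) give the two summands of the formula.\<close>

section \<open>Gaussian integrals\<close>

lemma normal_density_mult_gaussian_kernel:
  fixes g s u v :: real
  assumes "0 \<le> g" and "0 < s"
  defines "q \<equiv> 1 + 2 * g * s\<^sup>2"
  shows "normal_density 0 s v * exp (- g * (u - v)\<^sup>2)
    = exp (- g * u\<^sup>2 / q) / sqrt q * normal_density (2 * g * s\<^sup>2 * u / q) (s / sqrt q) v"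
proof -
  have q: "0 < q" using assms by (simp add: add_pos_nonneg)
  have var: "(s / sqrt q)\<^sup>2 = s\<^sup>2 / q" using q by (simp add: power_divide)
  have "- (v - 0)\<^sup>2 / (2 * s\<^sup>2) + - g * (u - v)\<^sup>2
      = - (q * v\<^sup>2 + 2 * s\<^sup>2 * q * g * (u - v)\<^sup>2) / (2 * s\<^sup>2 * q)"
    using q \<open>0 < s\<close> by (simp add: field_simps)
  also have "q * v\<^sup>2 + 2 * s\<^sup>2 * q * g * (u - v)\<^sup>2 = 2 * s\<^sup>2 * g * u\<^sup>2 + (q * v - 2 * g * s\<^sup>2 * u)\<^sup>2"
    unfolding q_def by (simp add: power2_eq_square algebra_simps)
  also have "- (2 * s\<^sup>2 * g * u\<^sup>2 + (q * v - 2 * g * s\<^sup>2 * u)\<^sup>2) / (2 * s\<^sup>2 * q)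
      = - g * u\<^sup>2 / q + - (v - 2 * g * s\<^sup>2 * u / q)\<^sup>2 / (2 * (s / sqrt q)\<^sup>2)"
    using q \<open>0 < s\<close> by (simp add: var field_simps power2_eq_square)
  finally have exponent: "- (v - 0)\<^sup>2 / (2 * s\<^sup>2) + - g * (u - v)\<^sup>2
      = - g * u\<^sup>2 / q + - (v - 2 * g * s\<^sup>2 * u / q)\<^sup>2 / (2 * (s / sqrt q)\<^sup>2)" .
  have prefactor: "1 / sqrt (2 * pi * (s / sqrt q)\<^sup>2) = sqrt q / sqrt (2 * pi * s\<^sup>2)"
    using q \<open>0 < s\<close> by (simp add: var real_sqrt_divide real_sqrt_mult field_simps)
  have "normal_density 0 s v * exp (- g * (u - v)\<^sup>2)
      = 1 / sqrt (2 * pi * s\<^sup>2) * exp (- (v - 0)\<^sup>2 / (2 * s\<^sup>2) + - g * (u - v)\<^sup>2)"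
    unfolding normal_density_def exp_add by (simp only: mult.assoc)
  also have "\<dots> = exp (- g * u\<^sup>2 / q) / sqrt q
      * (1 / sqrt (2 * pi * (s / sqrt q)\<^sup>2) * exp (- (v - 2 * g * s\<^sup>2 * u / q)\<^sup>2 / (2 * (s / sqrt q)\<^sup>2)))"
    unfolding exponent prefactor exp_add using q by simp
  finally show ?thesis by (simp only: normal_density_def)
qed

definition gaussian_smoothing :: "real \<Rightarrow> real \<Rightarrow> real \<Rightarrow> real" where
  "gaussian_smoothing g s u = exp (- g * u\<^sup>2 / (1 + 2 * g * s\<^sup>2)) / sqrt (1 + 2 * g * s\<^sup>2)"

lemma integral_normal_gaussian_kernel:
  assumes "0 \<le> g" and "0 < s"
  shows "(\<integral>v. exp (- g * (u - v)\<^sup>2) \<partial>density lborel (normal_density 0 s)) = gaussian_smoothing g s u"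
proof -
  define q where "q = 1 + 2 * g * s\<^sup>2"
  have "0 < q" using assms by (simp add: q_def add_pos_nonneg)
  have "(\<integral>v. exp (- g * (u - v)\<^sup>2) \<partial>density lborel (normal_density 0 s))
      = (\<integral>v. normal_density 0 s v * exp (- g * (u - v)\<^sup>2) \<partial>lborel)"
    by (subst integral_density) auto
  also have "\<dots> = (\<integral>v. exp (- g * u\<^sup>2 / q) / sqrt q * normal_density (2 * g * s\<^sup>2 * u / q) (s / sqrt q) v \<partial>lborel)"
    unfolding q_def using assms by (simp only: normal_density_mult_gaussian_kernel)
  also have "\<dots> = exp (- g * u\<^sup>2 / q) / sqrt q"
    using \<open>0 < q\<close> \<open>0 < s\<close> by simp
  finally show ?thesis unfolding q_def gaussian_smoothing_def .
qed

lemma borel_measurable_gaussian_smoothing [measurable]: "gaussian_smoothing g s \<in> borel_measurable borel"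
  unfolding gaussian_smoothing_def by measurable

lemma gaussian_smoothing_nonneg: "0 \<le> g \<Longrightarrow> 0 \<le> gaussian_smoothing g s u"
  by (simp add: gaussian_smoothing_def)

lemma gaussian_smoothing_le_one:
  assumes "0 \<le> g"
  shows "gaussian_smoothing g s u \<le> 1"
proof -
  have q: "1 \<le> 1 + 2 * g * s\<^sup>2" using assms by simp
  then have "exp (- g * u\<^sup>2 / (1 + 2 * g * s\<^sup>2)) \<le> 1" using assms by simp
  also have "1 \<le> sqrt (1 + 2 * g * s\<^sup>2)" using q by simp
  finally show ?thesis using q by (simp add: gaussian_smoothing_def)
qed

lemma integral_normal_exp_neg_square:
  assumes "0 \<le> c" and "0 < s"
  shows "(\<integral>v. exp (- c * v\<^sup>2) \<partial>density lborel (normal_density 0 s)) = (1 + 2 * c * s\<^sup>2) powr (- 1 / 2)"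
  using integral_normal_gaussian_kernel[OF assms, of 0] assms
  by (simp add: gaussian_smoothing_def powr_minus_divide powr_half_sqrt add_pos_nonneg)

lemma integral_normal_gaussian_smoothing_power:
  assumes "0 \<le> g" and "0 < s"
  shows "(\<integral>u. gaussian_smoothing g s u ^ n \<partial>density lborel (normal_density 0 s))
    = (1 + 2 * g * s\<^sup>2) powr (- (real n - 1) / 2) * (1 + 2 * (real n + 1) * g * s\<^sup>2) powr (- 1 / 2)"
proof -
  define q where "q = 1 + 2 * g * s\<^sup>2"
  have q: "0 < q" using assms by (simp add: q_def add_pos_nonneg)
  have c: "0 \<le> real n * g / q" using assms q by simp
  have power: "gaussian_smoothing g s u ^ n = q powr (- real n / 2) * exp (- (real n * g / q) * u\<^sup>2)" for u
  proof -
    have "sqrt q ^ n = q powr (real n / 2)"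
      using q by (simp add: powr_half_sqrt[symmetric] powr_realpow[symmetric] powr_powr)
    then show ?thesis
      using q by (simp add: gaussian_smoothing_def q_def[symmetric] power_divide exp_of_nat_mult[symmetric]
          powr_minus_divide)
  qed
  have "(\<integral>u. gaussian_smoothing g s u ^ n \<partial>density lborel (normal_density 0 s))
      = q powr (- real n / 2) * (1 + 2 * (real n * g / q) * s\<^sup>2) powr (- 1 / 2)"
    unfolding power using integral_normal_exp_neg_square[OF c \<open>0 < s\<close>] by simp
  also have "1 + 2 * (real n * g / q) * s\<^sup>2 = (1 + 2 * (real n + 1) * g * s\<^sup>2) / q"
    using q by (simp add: q_def field_simps)
  also have "q powr (- real n / 2) * ((1 + 2 * (real n + 1) * g * s\<^sup>2) / q) powr (- 1 / 2)
      = q powr (- (real n - 1) / 2) * (1 + 2 * (real n + 1) * g * s\<^sup>2) powr (- 1 / 2)"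
  proof -
    have "q powr (- (real n - 1) / 2) = q powr (- real n / 2) * q powr (1 / 2)"
      by (simp add: powr_add[symmetric] diff_divide_distrib)
    then show ?thesis
      using q assms by (simp add: powr_divide add_pos_nonneg powr_minus_divide)
  qed
  finally show ?thesis unfolding q_def .
qed

lemma powr_neg_half_power: "0 < x \<Longrightarrow> (x powr - (1 / 2)) ^ n = x powr - (real n / 2)"
  for x :: real
  by (simp add: powr_power)

section \<open>Integrals over finite products of probability spaces\<close>

lemma integral_PiM_prod_subset:
  fixes f :: "'i \<Rightarrow> 'a \<Rightarrow> real"
  assumes "finite I" and "S \<subseteq> I" and prob: "\<And>p. prob_space (M p)"
    and integrable: "\<And>p. p \<in> S \<Longrightarrow> integrable (M p) (f p)"
  shows "(\<integral>x. (\<Prod>p\<in>S. f p (x p)) \<partial>PiM I M) = (\<Prod>p\<in>S. integral\<^sup>L (M p) (f p))"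
proof -
  interpret product_sigma_finite M
    unfolding product_sigma_finite_def using prob prob_space_imp_sigma_finite by blast
  define f' where "f' p = (if p \<in> S then f p else (\<lambda>_. 1))" for p
  have f'_apply: "f' p y = (if p \<in> S then f p y else 1)" for p y
    by (simp add: f'_def)
  have "(\<integral>x. (\<Prod>p\<in>S. f p (x p)) \<partial>PiM I M) = (\<integral>x. (\<Prod>p\<in>I. f' p (x p)) \<partial>PiM I M)"
    using \<open>finite I\<close> \<open>S \<subseteq> I\<close> by (simp add: f'_apply prod.If_cases Int_absorb1)
  also have "\<dots> = (\<Prod>p\<in>I. integral\<^sup>L (M p) (f' p))"
    using \<open>finite I\<close> integrable prob
    by (intro product_integral_prod) (auto simp: f'_def intro: finite_measure.integrable_const prob_space.finite_measure)
  also have "\<dots> = (\<Prod>p\<in>S. integral\<^sup>L (M p) (f p))"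
    using \<open>finite I\<close> \<open>S \<subseteq> I\<close> prob
    by (simp add: f'_def prod.If_cases Int_absorb1 if_distrib prob_space.prob_space cong: if_cong)
  finally show ?thesis .
qed

lemma prod_Times_singleton_Times:
  "(\<Prod>p\<in>A \<times> {k} \<times> B. f p) = (\<Prod>a\<in>A. \<Prod>b\<in>B. f (a, k, b))"
proof -
  have "(\<Prod>p\<in>A \<times> {k} \<times> B. f p) = (\<Prod>(a, b)\<in>A \<times> B. f (a, k, b))"
    by (rule prod.reindex_bij_witness[where i="\<lambda>(a, b). (a, k, b)" and j="\<lambda>(a, k, b). (a, b)"]) auto
  then show ?thesis by (simp add: prod.cartesian_product)
qed

section \<open>Mixtures of Poisson generating functions\<close>

lemma has_bochner_integral_poisson_power:
  assumes "0 < r" and "0 \<le> x"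
  shows "has_bochner_integral (measure_pmf (poisson_pmf r)) (\<lambda>n. x ^ n) (exp (r * (x - 1)))"
proof (rule has_bochner_integral_nn_integral)
  have series: "(\<lambda>n. pmf (poisson_pmf r) n * x ^ n) sums exp (r * (x - 1))"
  proof -
    have "(\<lambda>n. exp (- r) * ((r * x) ^ n /\<^sub>R fact n)) sums (exp (- r) * exp (r * x))"
      by (intro sums_mult exp_converges)
    moreover have "exp (- r) * ((r * x) ^ n /\<^sub>R fact n) = pmf (poisson_pmf r) n * x ^ n" for n
      using \<open>0 < r\<close> by (simp add: field_simps)
    moreover have "exp (- r) * exp (r * x) = exp (r * (x - 1))"
      by (simp add: exp_add[symmetric] algebra_simps)
    ultimately show ?thesis by simp
  qed
  have "(\<integral>\<^sup>+n. ennreal (x ^ n) \<partial>measure_pmf (poisson_pmf r))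
      = (\<Sum>n. ennreal (pmf (poisson_pmf r) n * x ^ n))"
    unfolding nn_integral_measure_pmf nn_integral_count_space_nat[symmetric]
    using \<open>0 \<le> x\<close> by (simp add: ennreal_mult'')
  also have "\<dots> = ennreal (exp (r * (x - 1)))"
    using \<open>0 \<le> x\<close> series by (simp add: suminf_ennreal2 sums_summable sums_unique[symmetric])
  finally show "(\<integral>\<^sup>+n. ennreal (x ^ n) \<partial>measure_pmf (poisson_pmf r)) = ennreal (exp (r * (x - 1)))" .
qed (use \<open>0 \<le> x\<close> in auto)

lemma abs_exp_minus_one_minus_le: "\<bar>exp t - 1 - t\<bar> \<le> t\<^sup>2 * exp \<bar>t\<bar>" for t :: real
proof -
  obtain \<tau> where "\<bar>\<tau>\<bar> \<le> \<bar>t\<bar>" and "exp t = (\<Sum>m<2. t ^ m / fact m) + exp \<tau> / fact 2 * t ^ 2"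
    using Maclaurin_exp_le[of t 2] by blast
  then have remainder: "exp t - 1 - t = exp \<tau> / 2 * t\<^sup>2"
    by (simp add: numeral_2_eq_2)
  have "exp \<tau> \<le> exp \<bar>t\<bar>"
    using \<open>\<bar>\<tau>\<bar> \<le> \<bar>t\<bar>\<close> by simp
  have "exp \<tau> / 2 * t\<^sup>2 \<le> exp \<bar>t\<bar> * t\<^sup>2"
  proof (rule mult_right_mono)
    show "exp \<tau> / 2 \<le> exp \<bar>t\<bar>"
      using exp_gt_zero[of \<tau>] \<open>exp \<tau> \<le> exp \<bar>t\<bar>\<close> by linarith
  qed simp
  then show ?thesis
    unfolding remainder by (simp add: abs_mult mult.commute)
qed

lemma abs_exp_difference_quotient_remainder_le:
  fixes h l B :: real
  assumes "h \<noteq> 0" and "\<bar>h\<bar> \<le> 1" and "\<bar>l\<bar> \<le> B"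
  shows "\<bar>(exp (h * l) - 1 - h * l) / h\<bar> \<le> B\<^sup>2 * exp B * \<bar>h\<bar>"
proof -
  have "\<bar>h * l\<bar> \<le> 1 * B"
    unfolding abs_mult using assms by (intro mult_mono) auto
  moreover have "(h * l)\<^sup>2 \<le> (h * B)\<^sup>2"
    unfolding power_mult_distrib using assms
    by (intro mult_left_mono) (auto simp: abs_le_square_iff[symmetric])
  ultimately have "(h * l)\<^sup>2 * exp \<bar>h * l\<bar> \<le> (h * B)\<^sup>2 * exp B"
    by (intro mult_mono) auto
  then have "\<bar>exp (h * l) - 1 - h * l\<bar> \<le> \<bar>h\<bar> * (B\<^sup>2 * exp B * \<bar>h\<bar>)"
    using order_trans[OF abs_exp_minus_one_minus_le[of "h * l"]] by (simp add: power2_eq_square mult_ac)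
  then show ?thesis
    using assms by (simp add: divide_le_eq mult_ac)
qed

lemma abs_power_mult_exp_le:
  fixes l B x :: real
  assumes "\<bar>l\<bar> \<le> B"
  shows "\<bar>l ^ n * exp (x * l)\<bar> \<le> B ^ n * exp (\<bar>x\<bar> * B)"
proof -
  have "x * l \<le> \<bar>x\<bar> * B"
    using assms abs_ge_self[of "x * l"] mult_left_mono[of "\<bar>l\<bar>" B "\<bar>x\<bar>"] by (simp add: abs_mult)
  then show ?thesis
    using assms by (simp add: abs_mult power_abs mult_mono power_mono)
qed

lemma has_real_derivative_integral_power_exp:
  fixes L :: "'a \<Rightarrow> real"
  assumes "prob_space M" and L_measurable: "L \<in> borel_measurable M"
    and L_bounded: "\<And>z. z \<in> space M \<Longrightarrow> \<bar>L z\<bar> \<le> C"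
  shows "((\<lambda>x. \<integral>z. L z ^ m * exp (x * L z) \<partial>M) has_real_derivative
      (\<integral>z. L z ^ Suc m * exp (x0 * L z) \<partial>M)) (at x0)"
proof -
  interpret prob_space M by fact
  define H where "H n x = (\<integral>z. L z ^ n * exp (x * L z) \<partial>M)" for n x
  define B where "B = \<bar>C\<bar>"
  have bounded: "\<bar>L z\<bar> \<le> B" if "z \<in> space M" for z
    using L_bounded[OF that] by (simp add: B_def)
  have factor_bounded: "\<bar>L z ^ n * exp (x * L z)\<bar> \<le> B ^ n * exp (\<bar>x\<bar> * B)" if "z \<in> space M" for n x z
    using bounded[OF that] by (rule abs_power_mult_exp_le)
  have integrable: "integrable M (\<lambda>z. L z ^ n * exp (x * L z))" for n x
    using factor_bounded L_measurable
    by (intro integrable_const_bound[where B="B ^ n * exp (\<bar>x\<bar> * B)"]) auto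
  define K where "K = B ^ m * exp (\<bar>x0\<bar> * B) * (B\<^sup>2 * exp B)"
  define R where "R h z = L z ^ m * exp (x0 * L z) * ((exp (h * L z) - 1 - h * L z) / h)" for h z
  have quotient: "(H m y - H m x0) / (y - x0) - H (Suc m) x0 = (\<integral>z. R (y - x0) z \<partial>M)" if "y \<noteq> x0" for y
  proof -
    have "R (y - x0) z = (L z ^ m * exp (y * L z) - L z ^ m * exp (x0 * L z)) / (y - x0)
        - L z ^ Suc m * exp (x0 * L z)" for z
      using that by (simp add: R_def exp_add[symmetric] field_simps)
    then show ?thesis
      unfolding H_def using integrable by (simp del: power_Suc)
  qed
  have remainder_bounded: "\<bar>\<integral>z. R (y - x0) z \<partial>M\<bar> \<le> K * \<bar>y - x0\<bar>" if "y \<noteq> x0" "\<bar>y - x0\<bar> \<le> 1" for y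
  proof -
    have pointwise: "\<bar>R (y - x0) z\<bar> \<le> K * \<bar>y - x0\<bar>" if "z \<in> space M" for z
    proof -
      have "\<bar>R (y - x0) z\<bar> = \<bar>L z ^ m * exp (x0 * L z)\<bar>
          * \<bar>(exp ((y - x0) * L z) - 1 - (y - x0) * L z) / (y - x0)\<bar>"
        unfolding R_def by (rule abs_mult)
      also have "\<dots> \<le> (B ^ m * exp (\<bar>x0\<bar> * B)) * (B\<^sup>2 * exp B * \<bar>y - x0\<bar>)"
        using \<open>y \<noteq> x0\<close> \<open>\<bar>y - x0\<bar> \<le> 1\<close> bounded[OF that]
        by (intro mult_mono factor_bounded[OF that] abs_exp_difference_quotient_remainder_le) auto
      finally show ?thesis by (simp add: K_def mult_ac)
    qed
    have "(\<lambda>z. R (y - x0) z) \<in> borel_measurable M"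
      unfolding R_def using L_measurable by measurable
    then have "integrable M (R (y - x0))"
      using pointwise by (intro integrable_const_bound[where B="K * \<bar>y - x0\<bar>"]) auto
    then have "(\<integral>z. norm (R (y - x0) z) \<partial>M) \<le> K * \<bar>y - x0\<bar>"
      using pointwise by (intro integral_le_const) auto
    then have "norm (\<integral>z. R (y - x0) z \<partial>M) \<le> K * \<bar>y - x0\<bar>"
      by (rule order_trans[OF integral_norm_bound])
    then show ?thesis by simp
  qed
  have "((\<lambda>y. (H m y - H m x0) / (y - x0) - H (Suc m) x0) \<longlongrightarrow> 0) (at x0)"
  proof (rule Lim_null_comparison)
    show "\<forall>\<^sub>F y in at x0. norm ((H m y - H m x0) / (y - x0) - H (Suc m) x0) \<le> K * \<bar>y - x0\<bar>"
      unfolding eventually_at using quotient remainder_bounded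
      by (intro exI[of _ 1]) (auto simp: dist_real_def)
    show "((\<lambda>y. K * \<bar>y - x0\<bar>) \<longlongrightarrow> 0) (at x0)"
      by (rule tendsto_eq_intros refl | simp)+
  qed
  then show ?thesis
    unfolding has_field_derivative_iff H_def[symmetric] by (simp add: LIM_zero_iff)
qed

lemma mixed_pgf_second_derivative_at_one:
  fixes L :: "'a \<Rightarrow> real" and G :: "real \<Rightarrow> real"
  assumes "prob_space M" and "L \<in> borel_measurable M" and "\<And>z. z \<in> space M \<Longrightarrow> \<bar>L z\<bar> \<le> C"
    and G: "\<And>x. 0 < x \<Longrightarrow> G x = (\<integral>z. exp ((x - 1) * L z) \<partial>M)"
  shows "(\<forall>\<^sub>F x in nhds 1. G differentiable at x)
    \<and> (deriv G has_real_derivative (\<integral>z. (L z)\<^sup>2 \<partial>M)) (at 1)"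
proof -
  define H where "H m x = (\<integral>z. L z ^ m * exp ((x - 1) * L z) \<partial>M)" for m x
  have H_deriv: "(H m has_real_derivative H (Suc m) x) (at x)" for m x
    using has_real_derivative_integral_power_exp[OF assms(1-3), of m "x + -1"]
    unfolding DERIV_shift H_def by simp
  have G_deriv: "(G has_real_derivative H 1 x) (at x)" if "0 < x" for x
  proof (rule has_field_derivative_transform_within_open[OF H_deriv[of 0 x, unfolded One_nat_def[symmetric]] open_greaterThan[of 0]])
    show "H 0 y = G y" if "y \<in> {0<..}" for y
      using that G by (simp add: H_def)
  qed (use that in simp)
  have "\<forall>\<^sub>F x in nhds 1. x \<in> {0::real<..}"
    by (rule eventually_nhds_in_open) auto
  then have "\<forall>\<^sub>F x in nhds 1. G differentiable at x"
    by (rule eventually_mono) (use G_deriv real_differentiable_def in blast)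
  moreover have "(deriv G has_real_derivative H 2 1) (at 1)"
  proof (rule has_field_derivative_transform_within_open[OF _ open_greaterThan[of 0]])
    show "(H 1 has_real_derivative H 2 1) (at 1)"
      using H_deriv[of 1 1] by (simp add: numeral_2_eq_2)
    show "H 1 y = deriv G y" if "y \<in> {0<..}" for y
      using that G_deriv DERIV_imp_deriv by (metis greaterThan_iff)
  qed simp
  ultimately show ?thesis by (simp add: H_def)
qed

section \<open>The latent space model\<close>

text \<open>The product lemmas for \<open>PiM\<close> need every factor to be a probability space, so the
  standard deviation is replaced by 1 wherever it is not positive; for positive \<open>\<sigma>\<close> these are
  the factors of \<open>latent_measure\<close>.\<close>

definition latent_factor :: "(nat \<Rightarrow> real) \<Rightarrow> nat \<times> nat \<times> nat \<Rightarrow> real measure" where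
  "latent_factor \<sigma> p =
     density lborel (normal_density 0 (if 0 < \<sigma> (fst (snd p)) then \<sigma> (fst (snd p)) else 1))"

lemma prob_space_latent_factor: "prob_space (latent_factor \<sigma> p)"
  unfolding latent_factor_def by (rule prob_space_normal_density) simp

lemma sets_latent_factor [measurable_cong, simp]: "sets (latent_factor \<sigma> p) = sets borel"
  by (simp add: latent_factor_def)

lemma latent_factor_eq: "0 < \<sigma> k \<Longrightarrow> latent_factor \<sigma> (i, k, c) = density lborel (normal_density 0 (\<sigma> k))"
  by (simp add: latent_factor_def)

lemma latent_measure_eq_PiM:
  assumes "\<forall>k\<in>{1..K}. 0 < \<sigma> k"
  shows "latent_measure N K d \<sigma> = PiM ({1..N} \<times> {1..K} \<times> {1..d}) (latent_factor \<sigma>)"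
  unfolding latent_measure_def using assms by (intro PiM_cong) (auto simp: latent_factor_eq)

lemma prob_space_latent_measure:
  "\<forall>k\<in>{1..K}. 0 < \<sigma> k \<Longrightarrow> prob_space (latent_measure N K d \<sigma>)"
  by (simp add: latent_measure_eq_PiM prob_space_PiM prob_space_latent_factor)

lemma latent_sqdist_commute: "latent_sqdist d z k i j = latent_sqdist d z k j i"
  by (simp add: latent_sqdist_def power2_commute)

lemma latent_sqdist_nonneg: "0 \<le> latent_sqdist d z k i j"
  by (simp add: latent_sqdist_def sum_nonneg)

lemma measurable_latent_sqdist [measurable]:
  assumes "i \<in> {1..N}" and "j \<in> {1..N}" and "k \<in> {1..K}"
  shows "(\<lambda>z. latent_sqdist d z k i j) \<in> borel_measurable (PiM ({1..N} \<times> {1..K} \<times> {1..d}) (latent_factor \<sigma>))"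
  unfolding latent_sqdist_def
proof (intro borel_measurable_sum)
  fix c assume "c \<in> {1..d}"
  then have "(i, k, c) \<in> {1..N} \<times> {1..K} \<times> {1..d}" and "(j, k, c) \<in> {1..N} \<times> {1..K} \<times> {1..d}"
    using assms by auto
  then show "(\<lambda>z. (z (i, k, c) - z (j, k, c))\<^sup>2) \<in> borel_measurable (PiM ({1..N} \<times> {1..K} \<times> {1..d}) (latent_factor \<sigma>))"
    by measurable
qed

lemma integral_latent_neighbours:
  assumes "0 \<le> g" and "0 < \<sigma> k" and "finite T"
    and "{i} \<times> {k} \<times> {1..d} \<subseteq> R" and "R \<inter> T \<times> {k} \<times> {1..d} = {}"
  shows "(\<integral>y. (\<Prod>t\<in>T. exp (- g * latent_sqdist d (merge R (T \<times> {k} \<times> {1..d}) (x, y)) k i t))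
      \<partial>PiM (T \<times> {k} \<times> {1..d}) (latent_factor \<sigma>))
    = (\<Prod>c\<in>{1..d}. gaussian_smoothing g (\<sigma> k) (x (i, k, c))) ^ card T"
proof -
  let ?B = "T \<times> {k} \<times> {1..d}"
  let ?h = "\<lambda>p v. exp (- g * (x (i, k, snd (snd p)) - v)\<^sup>2)"
  have "(\<Prod>t\<in>T. exp (- g * latent_sqdist d (merge R ?B (x, y)) k i t)) = (\<Prod>p\<in>?B. ?h p (y p))" for y
  proof -
    have "merge R ?B (x, y) (i, k, c) = x (i, k, c)" "merge R ?B (x, y) (t, k, c) = y (t, k, c)"
      if "c \<in> {1..d}" "t \<in> T" for c t
    proof -
      have "(i, k, c) \<in> R" "(t, k, c) \<in> ?B" using that assms(4) by auto
      then show "merge R ?B (x, y) (i, k, c) = x (i, k, c)" "merge R ?B (x, y) (t, k, c) = y (t, k, c)"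
        using assms(5) by (auto simp: merge_def)
    qed
    then show ?thesis
      by (simp add: latent_sqdist_def sum_distrib_left exp_sum prod_Times_singleton_Times)
  qed
  then have "(\<integral>y. (\<Prod>t\<in>T. exp (- g * latent_sqdist d (merge R ?B (x, y)) k i t)) \<partial>PiM ?B (latent_factor \<sigma>))
      = (\<integral>y. (\<Prod>p\<in>?B. ?h p (y p)) \<partial>PiM ?B (latent_factor \<sigma>))"
    by simp
  also have "\<dots> = (\<Prod>p\<in>?B. integral\<^sup>L (latent_factor \<sigma> p) (?h p))"
    using \<open>finite T\<close> \<open>0 \<le> g\<close>
    by (intro integral_PiM_prod_subset prob_space_latent_factor finite_measure.integrable_const_bound[where B=1]
        prob_space.finite_measure) auto
  also have "\<dots> = (\<Prod>t\<in>T. \<Prod>c\<in>{1..d}. gaussian_smoothing g (\<sigma> k) (x (i, k, c)))"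
    using integral_normal_gaussian_kernel[OF \<open>0 \<le> g\<close> \<open>0 < \<sigma> k\<close>] \<open>0 < \<sigma> k\<close>
    by (simp add: prod_Times_singleton_Times latent_factor_eq)
  finally show ?thesis by simp
qed

lemma integral_latent_prod_exp_sqdist:
  assumes "0 \<le> g" and \<sigma>: "\<forall>k'\<in>{1..K}. 0 < \<sigma> k'" and k: "k \<in> {1..K}" and i: "i \<in> {1..N}"
    and T: "T \<subseteq> {1..N}" "i \<notin> T"
  shows "(\<integral>z. (\<Prod>t\<in>T. exp (- g * latent_sqdist d z k i t)) \<partial>latent_measure N K d \<sigma>)
    = ((1 + 2 * g * (\<sigma> k)\<^sup>2) powr (- (real (card T) - 1) / 2)
        * (1 + 2 * (real (card T) + 1) * g * (\<sigma> k)\<^sup>2) powr (- 1 / 2)) ^ d"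
proof -
  interpret product_sigma_finite "latent_factor \<sigma>"
    unfolding product_sigma_finite_def using prob_space_latent_factor prob_space_imp_sigma_finite by blast
  have "0 < \<sigma> k" and "finite T" using \<sigma> k T finite_subset by auto
  define P where "P = {1..N} \<times> {1..K} \<times> {1..d}"
  define B where "B = T \<times> {k} \<times> {1..d}"
  define R where "R = P - B"
  define G where "G v = gaussian_smoothing g (\<sigma> k) v ^ card T" for v
  define f where "f z = (\<Prod>t\<in>T. exp (- g * latent_sqdist d z k i t))" for z
  have "B \<subseteq> P" using T k by (auto simp: B_def P_def)
  then have P_split: "P = R \<union> B" "R \<inter> B = {}" by (auto simp: R_def)
  have Z_i: "{i} \<times> {k} \<times> {1..d} \<subseteq> R" using i k T by (auto simp: R_def P_def B_def)
  have "finite R" "finite B" by (auto simp: P_def R_def B_def \<open>finite T\<close>)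
  have "f \<in> borel_measurable (PiM P (latent_factor \<sigma>))"
    unfolding f_def P_def by measurable (use i k T in auto)
  moreover have "norm (f z) \<le> 1" for z
    using \<open>0 \<le> g\<close> latent_sqdist_nonneg by (auto simp: f_def abs_prod intro!: prod_le_1)
  ultimately have "integrable (PiM (R \<union> B) (latent_factor \<sigma>)) f"
    unfolding P_split(1)[symmetric] using prob_space_PiM[OF prob_space_latent_factor]
    by (intro finite_measure.integrable_const_bound[where B=1] prob_space.finite_measure) auto
  then have "(\<integral>z. f z \<partial>PiM P (latent_factor \<sigma>))
      = (\<integral>x. (\<integral>y. f (merge R B (x, y)) \<partial>PiM B (latent_factor \<sigma>)) \<partial>PiM R (latent_factor \<sigma>))"
    unfolding P_split(1) by (rule product_integral_fold[OF P_split(2) \<open>finite R\<close> \<open>finite B\<close>])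
  also have "\<dots> = (\<integral>x. (\<Prod>p\<in>{i} \<times> {k} \<times> {1..d}. G (x p)) \<partial>PiM R (latent_factor \<sigma>))"
    using integral_latent_neighbours[where \<sigma>=\<sigma> and k=k, OF \<open>0 \<le> g\<close> \<open>0 < \<sigma> k\<close> \<open>finite T\<close> Z_i
        P_split(2)[unfolded B_def]]
    by (simp add: f_def B_def G_def prod_Times_singleton_Times prod_power_distrib)
  also have "\<dots> = (\<Prod>p\<in>{i} \<times> {k} \<times> {1..d}. integral\<^sup>L (latent_factor \<sigma> p) G)"
    using \<open>finite R\<close> Z_i \<open>0 \<le> g\<close>
    by (intro integral_PiM_prod_subset prob_space_latent_factor finite_measure.integrable_const_bound[where B=1]
        prob_space.finite_measure)
       (auto simp: G_def gaussian_smoothing_le_one gaussian_smoothing_nonneg power_le_one)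
  also have "\<dots> = (\<integral>v. G v \<partial>density lborel (normal_density 0 (\<sigma> k))) ^ d"
    using \<open>0 < \<sigma> k\<close> by (simp add: prod_Times_singleton_Times latent_factor_eq)
  finally show ?thesis
    unfolding G_def f_def P_def latent_measure_eq_PiM[OF \<sigma>]
    using integral_normal_gaussian_smoothing_power[OF \<open>0 \<le> g\<close> \<open>0 < \<sigma> k\<close>] by simp
qed

lemma integrable_exp_sqdist_mult:
  assumes "0 \<le> \<beta>" and \<sigma>: "\<forall>k'\<in>{1..K}. 0 < \<sigma> k'" and "k \<in> {1..K}"
    and "i \<in> {1..N}" and "j \<in> {1..N}" and "l \<in> {1..N}"
  shows "integrable (latent_measure N K d \<sigma>)
    (\<lambda>z. exp (- \<beta> * latent_sqdist d z k i j) * exp (- \<beta> * latent_sqdist d z k i l))"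
proof (rule finite_measure.integrable_const_bound[where B=1])
  show "finite_measure (latent_measure N K d \<sigma>)"
    using prob_space_latent_measure[OF \<sigma>] by (rule prob_space.finite_measure)
  show "AE z in latent_measure N K d \<sigma>.
      norm (exp (- \<beta> * latent_sqdist d z k i j) * exp (- \<beta> * latent_sqdist d z k i l)) \<le> 1"
    using \<open>0 \<le> \<beta>\<close> latent_sqdist_nonneg by (auto simp: abs_mult mult_le_one)
  show "(\<lambda>z. exp (- \<beta> * latent_sqdist d z k i j) * exp (- \<beta> * latent_sqdist d z k i l))
      \<in> borel_measurable (latent_measure N K d \<sigma>)"
    unfolding latent_measure_eq_PiM[OF \<sigma>] using assms(3-) by measurable
qed

lemma integral_latent_exp_sqdist_pair:
  assumes "0 \<le> \<beta>" and \<sigma>: "\<forall>k'\<in>{1..K}. 0 < \<sigma> k'" and "k \<in> {1..K}" and "i \<in> {1..N}"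
    and "j \<in> {1..N} - {i}" and "l \<in> {1..N} - {i}"
  shows "(\<integral>z. exp (- \<beta> * latent_sqdist d z k i j) * exp (- \<beta> * latent_sqdist d z k i l) \<partial>latent_measure N K d \<sigma>)
    = (if j = l then (1 + 8 * \<beta> * (\<sigma> k)\<^sup>2) powr (- real d / 2)
       else (1 + 2 * \<beta> * (\<sigma> k)\<^sup>2) powr (- real d / 2) * (1 + 6 * \<beta> * (\<sigma> k)\<^sup>2) powr (- real d / 2))"
proof -
  have pos: "0 < 1 + c * \<beta> * (\<sigma> k)\<^sup>2" if "0 \<le> c" for c
    using \<open>0 \<le> \<beta>\<close> that by (simp add: add_pos_nonneg)
  show ?thesis
  proof (cases "j = l")
    case True
    have "exp (- \<beta> * latent_sqdist d z k i j) * exp (- \<beta> * latent_sqdist d z k i l)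
        = (\<Prod>t\<in>{j}. exp (- (2 * \<beta>) * latent_sqdist d z k i t))" for z
      using True by (simp add: exp_add[symmetric])
    then have "(\<integral>z. exp (- \<beta> * latent_sqdist d z k i j) * exp (- \<beta> * latent_sqdist d z k i l) \<partial>latent_measure N K d \<sigma>)
        = ((1 + 4 * \<beta> * (\<sigma> k)\<^sup>2) powr 0 * (1 + 8 * \<beta> * (\<sigma> k)\<^sup>2) powr (- 1 / 2)) ^ d"
      using assms integral_latent_prod_exp_sqdist[of "2 * \<beta>" K \<sigma> k i N "{j}" d] by (simp add: mult_ac)
    then show ?thesis
      using True pos[of 4] pos[of 8] by (simp add: powr_neg_half_power)
  next
    case False
    have "exp (- \<beta> * latent_sqdist d z k i j) * exp (- \<beta> * latent_sqdist d z k i l)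
        = (\<Prod>t\<in>{j, l}. exp (- \<beta> * latent_sqdist d z k i t))" for z
      using False by simp
    then have "(\<integral>z. exp (- \<beta> * latent_sqdist d z k i j) * exp (- \<beta> * latent_sqdist d z k i l) \<partial>latent_measure N K d \<sigma>)
        = ((1 + 2 * \<beta> * (\<sigma> k)\<^sup>2) powr (- 1 / 2) * (1 + 6 * \<beta> * (\<sigma> k)\<^sup>2) powr (- 1 / 2)) ^ d"
      using False assms integral_latent_prod_exp_sqdist[of \<beta> K \<sigma> k i N "{j, l}" d] by (simp add: mult_ac)
    then show ?thesis
      using False pos[of 2] pos[of 6] by (simp add: power_mult_distrib powr_neg_half_power)
  qed
qed

lemma integral_power_strength:
  fixes rate :: "nat \<times> nat \<Rightarrow> real"
  assumes "0 \<le> x" and "\<And>p. 0 < rate p" and "i \<in> {1..N}"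
  shows "(\<integral>y. x ^ strength N i y \<partial>PiM (node_pairs N) (\<lambda>p. measure_pmf (poisson_pmf (rate p))))
    = exp ((x - 1) * (\<Sum>j\<in>{1..N} - {i}. rate (min i j, max i j)))"
proof -
  define edge where "edge j = (min i j, max i j)" for j
  define E where "E = edge ` ({1..N} - {i})"
  have inj: "inj_on edge ({1..N} - {i})"
    by (auto simp: inj_on_def edge_def min_def max_def split: if_splits)
  have "E \<subseteq> node_pairs N"
    using \<open>i \<in> {1..N}\<close> by (auto simp: E_def edge_def node_pairs_def min_def max_def)
  have "finite (node_pairs N)"
    by (rule finite_subset[of _ "{1..N} \<times> {1..N}"]) (auto simp: node_pairs_def)
  have "x ^ strength N i y = (\<Prod>p\<in>E. x ^ y p)" for y
    unfolding strength_def power_sum E_def prod.reindex[OF inj] by (simp add: edge_def)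
  then have "(\<integral>y. x ^ strength N i y \<partial>PiM (node_pairs N) (\<lambda>p. measure_pmf (poisson_pmf (rate p))))
      = (\<integral>y. (\<Prod>p\<in>E. x ^ y p) \<partial>PiM (node_pairs N) (\<lambda>p. measure_pmf (poisson_pmf (rate p))))"
    by simp
  also have "\<dots> = (\<Prod>p\<in>E. \<integral>n. x ^ n \<partial>measure_pmf (poisson_pmf (rate p)))"
    using \<open>finite (node_pairs N)\<close> \<open>E \<subseteq> node_pairs N\<close> has_bochner_integral_poisson_power[OF assms(2,1)]
    by (intro integral_PiM_prod_subset) (auto intro: prob_space_measure_pmf integrable.intros)
  also have "\<dots> = (\<Prod>p\<in>E. exp (rate p * (x - 1)))"
    using has_bochner_integral_poisson_power[OF assms(2,1)] has_bochner_integral_integral_eq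
    by (intro prod.cong) blast+
  also have "\<dots> = (\<Prod>j\<in>{1..N} - {i}. exp ((x - 1) * rate (edge j)))"
    unfolding E_def prod.reindex[OF inj] by (simp add: mult.commute)
  also have "\<dots> = exp ((x - 1) * (\<Sum>j\<in>{1..N} - {i}. rate (edge j)))"
    by (simp add: exp_sum sum_distrib_left)
  finally show ?thesis by (simp add: edge_def)
qed

lemma edge_rate_eq:
  assumes "k \<in> {1..K}"
  shows "edge_rate K d \<alpha> \<beta> z k i j = exp (\<alpha> i + \<alpha> j - \<beta> * latent_sqdist d z k i j)"
  using assms by (simp add: edge_rate_def of_bool_def if_distrib[of "\<lambda>x. x * _"] sum.delta cong: if_cong)

lemma edge_rate_min_max:
  assumes "k \<in> {1..K}"
  shows "edge_rate K d \<alpha> \<beta> z k (min i j) (max i j) = exp (\<alpha> i + \<alpha> j - \<beta> * latent_sqdist d z k i j)"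
  using assms by (cases "i \<le> j") (simp_all add: edge_rate_eq min_def max_def latent_sqdist_commute add.commute)

lemma cond_pgf_eq_mixture:
  assumes "0 \<le> x" and "i \<in> {1..N}" and "k \<in> {1..K}"
  shows "cond_pgf N K d \<sigma> \<alpha> \<beta> k i x = (\<integral>z. exp ((x - 1)
      * (\<Sum>j\<in>{1..N} - {i}. exp (\<alpha> i + \<alpha> j - \<beta> * latent_sqdist d z k i j))) \<partial>latent_measure N K d \<sigma>)"
proof -
  have "weights_measure N K d \<alpha> \<beta> z k
      = PiM (node_pairs N) (\<lambda>p. measure_pmf (poisson_pmf (edge_rate K d \<alpha> \<beta> z k (fst p) (snd p))))" for z
    unfolding weights_measure_def by (intro PiM_cong) (auto simp: split_beta)
  moreover have "0 < edge_rate K d \<alpha> \<beta> z k a b" for z a b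
    by (simp add: edge_rate_def)
  ultimately show ?thesis
    unfolding cond_pgf_def using assms by (simp add: integral_power_strength edge_rate_min_max)
qed

lemma sum_if_eq_else:
  assumes "finite J" and "j \<in> J"
  shows "(\<Sum>l\<in>J. if j = l then A else C) = A + (real (card J) - 1) * C"
proof -
  have "1 \<le> card J" using assms by (simp add: Suc_le_eq card_gt_0_iff) blast
  then show ?thesis
    using assms by (simp add: sum.If_cases Diff_eq[symmetric] of_nat_diff Int_absorb1 algebra_simps)
qed

lemma integral_square_sum_exp_sqdist:
  assumes "0 \<le> \<beta>" and \<sigma>: "\<forall>k'\<in>{1..K}. 0 < \<sigma> k'" and k: "k \<in> {1..K}" and i: "i \<in> {1..N}"
  defines "J \<equiv> {1..N} - {i}"
  shows "(\<integral>z. (\<Sum>j\<in>J. exp (a - \<beta> * latent_sqdist d z k i j))\<^sup>2 \<partial>latent_measure N K d \<sigma>)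
    = exp (2 * a) * (real (card J) * (1 + 8 * \<beta> * (\<sigma> k)\<^sup>2) powr (- real d / 2)
        + real (card J) * (real (card J) - 1)
          * (1 + 2 * \<beta> * (\<sigma> k)\<^sup>2) powr (- real d / 2) * (1 + 6 * \<beta> * (\<sigma> k)\<^sup>2) powr (- real d / 2))"
proof -
  define A where "A = (1 + 8 * \<beta> * (\<sigma> k)\<^sup>2) powr (- real d / 2)"
  define C where "C = (1 + 2 * \<beta> * (\<sigma> k)\<^sup>2) powr (- real d / 2) * (1 + 6 * \<beta> * (\<sigma> k)\<^sup>2) powr (- real d / 2)"
  define f where "f j z = exp (- \<beta> * latent_sqdist d z k i j)" for j z
  have "finite J" by (simp add: J_def)
  have square: "(\<Sum>j\<in>J. exp (a - \<beta> * latent_sqdist d z k i j))\<^sup>2 = exp (2 * a) * (\<Sum>j\<in>J. \<Sum>l\<in>J. f j z * f l z)" for z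
    by (simp add: f_def power2_eq_square sum_product exp_diff exp_minus field_simps sum_distrib_left
        exp_add[symmetric] mult_2)
  have integrable: "integrable (latent_measure N K d \<sigma>) (\<lambda>z. f j z * f l z)" if "j \<in> J" "l \<in> J" for j l
    using that unfolding f_def J_def by (intro integrable_exp_sqdist_mult \<open>0 \<le> \<beta>\<close> \<sigma> k i) auto
  have row: "(\<Sum>l\<in>J. \<integral>z. f j z * f l z \<partial>latent_measure N K d \<sigma>) = A + (real (card J) - 1) * C" if "j \<in> J" for j
  proof -
    have "(\<Sum>l\<in>J. \<integral>z. f j z * f l z \<partial>latent_measure N K d \<sigma>) = (\<Sum>l\<in>J. if j = l then A else C)"
      using that integral_latent_exp_sqdist_pair[OF \<open>0 \<le> \<beta>\<close> \<sigma> k i]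
      by (intro sum.cong refl) (simp add: f_def A_def C_def J_def)
    also have "\<dots> = A + (real (card J) - 1) * C"
      using \<open>finite J\<close> that by (rule sum_if_eq_else)
    finally show ?thesis .
  qed
  have "(\<integral>z. (\<Sum>j\<in>J. exp (a - \<beta> * latent_sqdist d z k i j))\<^sup>2 \<partial>latent_measure N K d \<sigma>)
      = exp (2 * a) * (\<Sum>j\<in>J. \<Sum>l\<in>J. \<integral>z. f j z * f l z \<partial>latent_measure N K d \<sigma>)"
    unfolding square using integrable
    by (simp add: Bochner_Integration.integral_sum Bochner_Integration.integrable_sum)
  also have "\<dots> = exp (2 * a) * (\<Sum>j\<in>J. A + (real (card J) - 1) * C)"
    using row by simp
  finally show ?thesis
    unfolding A_def C_def by (simp add: algebra_simps)
qed

lemma borel_measurable_sum_exp_sqdist: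
  assumes "\<forall>k'\<in>{1..K}. 0 < \<sigma> k'" and "k \<in> {1..K}" and "i \<in> {1..N}"
  shows "(\<lambda>z. \<Sum>j\<in>{1..N} - {i}. exp (a - \<beta> * latent_sqdist d z k i j)) \<in> borel_measurable (latent_measure N K d \<sigma>)"
  unfolding latent_measure_eq_PiM[OF assms(1)] using assms(2,3) by measurable

lemma abs_sum_exp_sqdist_le:
  assumes "0 \<le> \<beta>"
  shows "\<bar>\<Sum>j\<in>J. exp (a - \<beta> * latent_sqdist d z k i j)\<bar> \<le> real (card J) * exp a"
proof -
  have "0 \<le> \<beta> * latent_sqdist d z k i j" for j
    using assms latent_sqdist_nonneg by simp
  then show ?thesis by (simp add: sum_nonneg sum_bounded_above)
qed

theorem mainTheorem2:
  fixes N K d :: nat and \<beta> a :: real and \<alpha> \<sigma> :: "nat \<Rightarrow> real" and i k :: nat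
  assumes "N \<ge> 2" and "d \<ge> 1" and "\<beta> > 0"
    and "\<forall>k'\<in>{1..K}. \<sigma> k' > 0"
    and "\<forall>i'\<in>{1..N}. \<forall>j'\<in>{1..N}. i' \<noteq> j' \<longrightarrow> \<alpha> i' + \<alpha> j' = a"
    and "i \<in> {1..N}" and "k \<in> {1..K}"
  shows "(\<forall>\<^sub>F x in nhds 1. cond_pgf N K d \<sigma> \<alpha> \<beta> k i differentiable at x)
    \<and> (deriv (cond_pgf N K d \<sigma> \<alpha> \<beta> k i) has_real_derivative
         exp (2 * a) * (real N - 1) * (8 * (\<sigma> k)\<^sup>2 * \<beta> + 1) powr (- real d / 2)
         + (real N - 1) * (real N - 2) * exp (2 * a)
             * (2 * (\<sigma> k)\<^sup>2 * \<beta> + 1) powr (- real d / 2)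
             * (6 * (\<sigma> k)\<^sup>2 * \<beta> + 1) powr (- real d / 2)) (at 1)"
proof -
  note \<sigma> = assms(4) and i = assms(6) and k = assms(7)
  define L where "L z = (\<Sum>j\<in>{1..N} - {i}. exp (a - \<beta> * latent_sqdist d z k i j))" for z
  have "cond_pgf N K d \<sigma> \<alpha> \<beta> k i x = (\<integral>z. exp ((x - 1) * L z) \<partial>latent_measure N K d \<sigma>)" if "0 < x" for x
    using that i k assms(5) by (simp add: cond_pgf_eq_mixture L_def)
  then have "(\<forall>\<^sub>F x in nhds 1. cond_pgf N K d \<sigma> \<alpha> \<beta> k i differentiable at x)
    \<and> (deriv (cond_pgf N K d \<sigma> \<alpha> \<beta> k i) has_real_derivative (\<integral>z. (L z)\<^sup>2 \<partial>latent_measure N K d \<sigma>)) (at 1)"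
    unfolding L_def using \<open>\<beta> > 0\<close>
    by (intro mixed_pgf_second_derivative_at_one[OF prob_space_latent_measure[OF \<sigma>]
          borel_measurable_sum_exp_sqdist[OF \<sigma> k i] abs_sum_exp_sqdist_le]) auto
  moreover have "(\<integral>z. (L z)\<^sup>2 \<partial>latent_measure N K d \<sigma>)
      = exp (2 * a) * (real N - 1) * (8 * (\<sigma> k)\<^sup>2 * \<beta> + 1) powr (- real d / 2)
        + (real N - 1) * (real N - 2) * exp (2 * a)
          * (2 * (\<sigma> k)\<^sup>2 * \<beta> + 1) powr (- real d / 2) * (6 * (\<sigma> k)\<^sup>2 * \<beta> + 1) powr (- real d / 2)"
  proof -
    have card: "real (card ({1..N} - {i})) = real N - 1"
      using i by (simp add: of_nat_diff)
    show ?thesis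
      unfolding L_def integral_square_sum_exp_sqdist[OF less_imp_le[OF \<open>\<beta> > 0\<close>] \<sigma> k i] card
      by (simp add: algebra_simps)
  qed
  ultimately show ?thesis by simp
qed

end
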